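(* Consider a point-to-point block-fading channel whose channel power gain $h(\nu)\ge 0$ at fading state $\nu$ is a random variable with a continuous probability density function, let $\sigma^2>0$ be the receiver noise power and $P_{\rm peak}>0$ a fixed peak power. For a target energy $\bar Q\ge 0$ and an average power budget $P_{\rm avg}\le P_{\rm peak}$, let Problem (P2)$(\bar Q,P_{\rm avg})$ be: maximize $E_\nu[\log(1+\alpha(\nu)h(\nu)p(\nu)/\sigma^2)]$ over functions $p(\nu),\alpha(\nu)$ subject to $E_\nu[(1-\alpha(\nu))h(\nu)p(\nu)]\ge \bar Q$, $E_\nu[p(\nu)]\le P_{\rm avg}$, $0\le p(\nu)\le P_{\rm peak}$ and $0\le\alpha(\nu)\le 1$ for all $\nu$. Let $\{p^a(\nu),\alpha^a(\nu)\}$ and $\{p^b(\nu),\alpha^b(\nu)\}$ be optimal solutions of (P2)$(\bar Q^a,P^a_{\rm avg})$ and (P2)$(\bar Q^b,P^b_{\rm avg})$, respectively. Then for any $0\le\theta\le1$ there exists a feasible pair $\{p^c(\nu),\alpha^c(\nu)\}$ (i.e. $0\le p^c(\nu)\le P_{\rm peak}$, $0\le \alpha^c(\nu)\le 1$ for all $\nu$) such that $E_\nu[r^c(\nu)]\ge\theta E_\nu[r^a(\nu)]+(1-\theta)E_\nu[r^b(\nu)]$, $E_\nu[Q^c(\nu)]\ge\theta\bar Q^a+(1-\theta)\bar Q^b$, and $E_\nu[p^c(\nu)]\le\theta P^a_{\rm avg}+(1-\theta)P^b_{\rm avg}$, where $r^\chi(\nu)=\log\big(1+\frac{h(\nu)\alpha^\chi(\nu)p^\chi(\nu)}{\sigma^2}\big)$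 for $\chi\in\{a,b,c\}$ and $Q^c(\nu)=(1-\alpha^c(\nu))h(\nu)p^c(\nu)$.
   Context: $p(\nu)$ is the transmit power and $\alpha(\nu)\in[0,1]$ the fraction of received signal power split to the information decoder at fading state $\nu$ (the rest goes to the energy harvester); $E_\nu$ denotes expectation over the fading state. *)

theory Defs
  imports "HOL-Probability.Probability"
begin

definition rate :: "real \<Rightarrow> ('a \<Rightarrow> real) \<Rightarrow> ('a \<Rightarrow> real) \<Rightarrow> ('a \<Rightarrow> real) \<Rightarrow> 'a \<Rightarrow> real" where
  "rate \<sigma>2 h \<alpha> p \<nu> = ln (1 + h \<nu> * \<alpha> \<nu> * p \<nu> / \<sigma>2)"

definition energy :: "('a \<Rightarrow> real) \<Rightarrow> ('a \<Rightarrow> real) \<Rightarrow> ('a \<Rightarrow> real) \<Rightarrow> 'a \<Rightarrow> real" where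
  "energy h \<alpha> p \<nu> = (1 - \<alpha> \<nu>) * h \<nu> * p \<nu>"

definition pointwise_feasible :: "'a measure \<Rightarrow> real \<Rightarrow> ('a \<Rightarrow> real) \<Rightarrow> ('a \<Rightarrow> real) \<Rightarrow> bool" where
  "pointwise_feasible M Ppeak p \<alpha> \<longleftrightarrow>
     p \<in> borel_measurable M \<and> \<alpha> \<in> borel_measurable M \<and>
     (\<forall>\<nu>\<in>space M. 0 \<le> p \<nu> \<and> p \<nu> \<le> Ppeak \<and> 0 \<le> \<alpha> \<nu> \<and> \<alpha> \<nu> \<le> 1)"

definition avg_rate :: "'a measure \<Rightarrow> real \<Rightarrow> ('a \<Rightarrow> real) \<Rightarrow> ('a \<Rightarrow> real) \<Rightarrow> ('a \<Rightarrow> real) \<Rightarrow> ennreal" where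
  "avg_rate M \<sigma>2 h p \<alpha> = (\<integral>\<^sup>+ \<nu>. ennreal (rate \<sigma>2 h \<alpha> p \<nu>) \<partial>M)"

definition avg_energy :: "'a measure \<Rightarrow> ('a \<Rightarrow> real) \<Rightarrow> ('a \<Rightarrow> real) \<Rightarrow> ('a \<Rightarrow> real) \<Rightarrow> ennreal" where
  "avg_energy M h p \<alpha> = (\<integral>\<^sup>+ \<nu>. ennreal (energy h \<alpha> p \<nu>) \<partial>M)"

definition P2_feasible :: "'a measure \<Rightarrow> ('a \<Rightarrow> real) \<Rightarrow> real \<Rightarrow> real \<Rightarrow> real \<Rightarrow> ('a \<Rightarrow> real) \<Rightarrow> ('a \<Rightarrow> real) \<Rightarrow> bool" where
  "P2_feasible M h Ppeak Qbar Pavg p \<alpha> \<longleftrightarrow>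
     pointwise_feasible M Ppeak p \<alpha> \<and>
     avg_energy M h p \<alpha> \<ge> ennreal Qbar \<and>
     (\<integral>\<nu>. p \<nu> \<partial>M) \<le> Pavg"

definition P2_optimal :: "'a measure \<Rightarrow> ('a \<Rightarrow> real) \<Rightarrow> real \<Rightarrow> real \<Rightarrow> real \<Rightarrow> real \<Rightarrow> ('a \<Rightarrow> real) \<Rightarrow> ('a \<Rightarrow> real) \<Rightarrow> bool" where
  "P2_optimal M h \<sigma>2 Ppeak Qbar Pavg p \<alpha> \<longleftrightarrow>
     P2_feasible M h Ppeak Qbar Pavg p \<alpha> \<and>
     (\<forall>p' \<alpha>'. P2_feasible M h Ppeak Qbar Pavg p' \<alpha>' \<longrightarrow>
        avg_rate M \<sigma>2 h p' \<alpha>' \<le> avg_rate M \<sigma>2 h p \<alpha>)"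

end

theory Submission
  imports Defs
begin

text \<open>The mixed policy spends the convex combination of the two power profiles and splits it
  so that the information power \<open>\<alpha> p\<close> is also the convex combination of the two information
  powers. Then the harvested energy \<open>(1 - \<alpha>) h p = h p - h \<alpha> p\<close> and the consumed power are
  affine in the mixture, while the rate \<open>ln (1 + h \<alpha> p / \<sigma>\<^sup>2)\<close> is a concave function of
  \<open>\<alpha> p\<close>; integrating these pointwise relations gives the three inequalities.\<close>

definition mix_power :: "real \<Rightarrow> ('a \<Rightarrow> real) \<Rightarrow> ('a \<Rightarrow> real) \<Rightarrow> 'a \<Rightarrow> real" where
  "mix_power \<theta> pa pb \<nu> = \<theta> * pa \<nu> + (1 - \<theta>) * pb \<nu>"

text \<open>Where the mixed power vanishes, division by zero makes the split \<open>0\<close>.\<close>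
definition mix_split ::
    "real \<Rightarrow> ('a \<Rightarrow> real) \<Rightarrow> ('a \<Rightarrow> real) \<Rightarrow> ('a \<Rightarrow> real) \<Rightarrow> ('a \<Rightarrow> real) \<Rightarrow> 'a \<Rightarrow> real" where
  "mix_split \<theta> pa \<alpha>a pb \<alpha>b \<nu> =
     (\<theta> * (\<alpha>a \<nu> * pa \<nu>) + (1 - \<theta>) * (\<alpha>b \<nu> * pb \<nu>)) / mix_power \<theta> pa pb \<nu>"

lemma convex_comb_between:
  fixes \<theta> x y lo hi :: real
  assumes "0 \<le> \<theta>" "\<theta> \<le> 1" "lo \<le> x" "x \<le> hi" "lo \<le> y" "y \<le> hi"
  shows "lo \<le> \<theta> * x + (1 - \<theta>) * y \<and> \<theta> * x + (1 - \<theta>) * y \<le> hi"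
proof -
  have "\<theta> * lo + (1 - \<theta>) * lo \<le> \<theta> * x + (1 - \<theta>) * y"
       "\<theta> * x + (1 - \<theta>) * y \<le> \<theta> * hi + (1 - \<theta>) * hi"
    using assms by (intro add_mono mult_left_mono; simp)+
  then show ?thesis by (simp add: algebra_simps)
qed

context
  fixes \<theta> :: real and pa \<alpha>a pb \<alpha>b :: "'a \<Rightarrow> real" and \<nu> :: 'a
  assumes \<theta>: "0 \<le> \<theta>" "\<theta> \<le> 1"
    and a: "0 \<le> pa \<nu>" "0 \<le> \<alpha>a \<nu>" "\<alpha>a \<nu> \<le> 1"
    and b: "0 \<le> pb \<nu>" "0 \<le> \<alpha>b \<nu>" "\<alpha>b \<nu> \<le> 1"
begin

private lemma information_power_between:
  "0 \<le> \<theta> * (\<alpha>a \<nu> * pa \<nu>) + (1 - \<theta>) * (\<alpha>b \<nu> * pb \<nu>) \<and>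
   \<theta> * (\<alpha>a \<nu> * pa \<nu>) + (1 - \<theta>) * (\<alpha>b \<nu> * pb \<nu>) \<le> mix_power \<theta> pa pb \<nu>"
  using \<theta> a b unfolding mix_power_def
  by (auto intro!: add_mono add_nonneg_nonneg mult_left_mono mult_left_le_one_le)

lemma mix_split_mult_mix_power:
  "mix_split \<theta> pa \<alpha>a pb \<alpha>b \<nu> * mix_power \<theta> pa pb \<nu> =
     \<theta> * (\<alpha>a \<nu> * pa \<nu>) + (1 - \<theta>) * (\<alpha>b \<nu> * pb \<nu>)"
  using information_power_between by (cases "mix_power \<theta> pa pb \<nu> = 0") (auto simp: mix_split_def)

lemma mix_split_between: "0 \<le> mix_split \<theta> pa \<alpha>a pb \<alpha>b \<nu> \<and> mix_split \<theta> pa \<alpha>a pb \<alpha>b \<nu> \<le> 1"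
  using information_power_between by (auto simp: mix_split_def divide_le_eq_1)

lemma rate_mix_ge:
  fixes \<sigma>2 :: real and h :: "'a \<Rightarrow> real"
  assumes "0 < \<sigma>2" "0 \<le> h \<nu>"
  shows "\<theta> * rate \<sigma>2 h \<alpha>a pa \<nu> + (1 - \<theta>) * rate \<sigma>2 h \<alpha>b pb \<nu>
           \<le> rate \<sigma>2 h (mix_split \<theta> pa \<alpha>a pb \<alpha>b) (mix_power \<theta> pa pb) \<nu>"
proof -
  define ua where "ua = 1 + h \<nu> * \<alpha>a \<nu> * pa \<nu> / \<sigma>2"
  define ub where "ub = 1 + h \<nu> * \<alpha>b \<nu> * pb \<nu> / \<sigma>2"
  have "0 < ua" "0 < ub" unfolding ua_def ub_def using assms a b by (auto intro!: add_pos_nonneg)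
  then have "(1 - (1 - \<theta>)) * ln ua + (1 - \<theta>) * ln ub
               \<le> ln ((1 - (1 - \<theta>)) *\<^sub>R ua + (1 - \<theta>) *\<^sub>R ub)"
    using concave_onD[OF ln_concave, of "1 - \<theta>" ua ub] \<theta> by simp
  moreover have "\<theta> * ua + (1 - \<theta>) * ub =
      1 + h \<nu> * (mix_split \<theta> pa \<alpha>a pb \<alpha>b \<nu> * mix_power \<theta> pa pb \<nu>) / \<sigma>2"
    unfolding mix_split_mult_mix_power ua_def ub_def using assms(1) by (simp add: field_simps)
  ultimately show ?thesis by (simp add: rate_def ua_def ub_def mult.assoc)
qed

lemma energy_mix:
  "energy h (mix_split \<theta> pa \<alpha>a pb \<alpha>b) (mix_power \<theta> pa pb) \<nu> =
     \<theta> * energy h \<alpha>a pa \<nu> + (1 - \<theta>) * energy h \<alpha>b pb \<nu>"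
proof -
  have "energy h (mix_split \<theta> pa \<alpha>a pb \<alpha>b) (mix_power \<theta> pa pb) \<nu> =
      h \<nu> * (mix_power \<theta> pa pb \<nu> - mix_split \<theta> pa \<alpha>a pb \<alpha>b \<nu> * mix_power \<theta> pa pb \<nu>)"
    unfolding energy_def by (simp add: algebra_simps)
  then show ?thesis
    unfolding mix_split_mult_mix_power by (simp add: energy_def mix_power_def algebra_simps)
qed

end

lemma pointwise_feasible_mix:
  assumes "pointwise_feasible M Ppeak pa \<alpha>a" "pointwise_feasible M Ppeak pb \<alpha>b"
    and "0 \<le> \<theta>" "\<theta> \<le> 1"
  shows "pointwise_feasible M Ppeak (mix_power \<theta> pa pb) (mix_split \<theta> pa \<alpha>a pb \<alpha>b)"
proof -
  have "pa \<in> borel_measurable M" "\<alpha>a \<in> borel_measurable M"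
       "pb \<in> borel_measurable M" "\<alpha>b \<in> borel_measurable M"
    using assms(1,2) by (simp_all add: pointwise_feasible_def)
  then have "mix_power \<theta> pa pb \<in> borel_measurable M" "mix_split \<theta> pa \<alpha>a pb \<alpha>b \<in> borel_measurable M"
    unfolding mix_split_def[abs_def] mix_power_def[abs_def] by measurable
  moreover have "0 \<le> mix_power \<theta> pa pb \<nu> \<and> mix_power \<theta> pa pb \<nu> \<le> Ppeak"
    and "0 \<le> mix_split \<theta> pa \<alpha>a pb \<alpha>b \<nu> \<and> mix_split \<theta> pa \<alpha>a pb \<alpha>b \<nu> \<le> 1"
    if "\<nu> \<in> space M" for \<nu>
    using assms that convex_comb_between[of \<theta> 0 "pa \<nu>" Ppeak "pb \<nu>"]
      mix_split_between[of \<theta> pa \<nu> \<alpha>a pb \<alpha>b]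
    unfolding pointwise_feasible_def mix_power_def by auto
  ultimately show ?thesis unfolding pointwise_feasible_def by blast
qed

lemma nn_integral_convex_comb:
  fixes f g :: "'a \<Rightarrow> real" and \<theta> :: real
  assumes "f \<in> borel_measurable M" "g \<in> borel_measurable M"
    and "\<And>\<nu>. \<nu> \<in> space M \<Longrightarrow> 0 \<le> f \<nu>" "\<And>\<nu>. \<nu> \<in> space M \<Longrightarrow> 0 \<le> g \<nu>"
    and "0 \<le> \<theta>" "\<theta> \<le> 1"
  shows "(\<integral>\<^sup>+\<nu>. ennreal (\<theta> * f \<nu> + (1 - \<theta>) * g \<nu>) \<partial>M) =
           ennreal \<theta> * (\<integral>\<^sup>+\<nu>. ennreal (f \<nu>) \<partial>M) + ennreal (1 - \<theta>) * (\<integral>\<^sup>+\<nu>. ennreal (g \<nu>) \<partial>M)"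
proof -
  have "(\<integral>\<^sup>+\<nu>. ennreal (\<theta> * f \<nu> + (1 - \<theta>) * g \<nu>) \<partial>M) =
          (\<integral>\<^sup>+\<nu>. ennreal \<theta> * ennreal (f \<nu>) + ennreal (1 - \<theta>) * ennreal (g \<nu>) \<partial>M)"
    using assms by (intro nn_integral_cong) (simp add: ennreal_mult ennreal_plus)
  also have "\<dots> = ennreal \<theta> * (\<integral>\<^sup>+\<nu>. ennreal (f \<nu>) \<partial>M) + ennreal (1 - \<theta>) * (\<integral>\<^sup>+\<nu>. ennreal (g \<nu>) \<partial>M)"
    using assms(1,2) by (simp add: nn_integral_add nn_integral_cmult)
  finally show ?thesis .
qed

context
  fixes M :: "'a measure" and h :: "'a \<Rightarrow> real" and Ppeak \<theta> :: real and pa \<alpha>a pb \<alpha>b :: "'a \<Rightarrow> real"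
  assumes h: "h \<in> borel_measurable M" "\<And>\<nu>. \<nu> \<in> space M \<Longrightarrow> 0 \<le> h \<nu>"
    and feasible: "pointwise_feasible M Ppeak pa \<alpha>a" "pointwise_feasible M Ppeak pb \<alpha>b"
    and \<theta>: "0 \<le> \<theta>" "\<theta> \<le> 1"
begin

lemma avg_rate_mix_ge:
  assumes "0 < \<sigma>2"
  shows "ennreal \<theta> * avg_rate M \<sigma>2 h pa \<alpha>a + ennreal (1 - \<theta>) * avg_rate M \<sigma>2 h pb \<alpha>b
           \<le> avg_rate M \<sigma>2 h (mix_power \<theta> pa pb) (mix_split \<theta> pa \<alpha>a pb \<alpha>b)"
proof -
  have "ennreal \<theta> * avg_rate M \<sigma>2 h pa \<alpha>a + ennreal (1 - \<theta>) * avg_rate M \<sigma>2 h pb \<alpha>b =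
      (\<integral>\<^sup>+\<nu>. ennreal (\<theta> * rate \<sigma>2 h \<alpha>a pa \<nu> + (1 - \<theta>) * rate \<sigma>2 h \<alpha>b pb \<nu>) \<partial>M)"
    unfolding avg_rate_def using h feasible assms \<theta>
    by (intro nn_integral_convex_comb[symmetric])
       (auto simp: rate_def pointwise_feasible_def)
  also have "\<dots> \<le> avg_rate M \<sigma>2 h (mix_power \<theta> pa pb) (mix_split \<theta> pa \<alpha>a pb \<alpha>b)"
    unfolding avg_rate_def using h feasible assms \<theta>
    by (intro nn_integral_mono ennreal_leI rate_mix_ge) (auto simp: pointwise_feasible_def)
  finally show ?thesis .
qed

lemma avg_energy_mix:
  "avg_energy M h (mix_power \<theta> pa pb) (mix_split \<theta> pa \<alpha>a pb \<alpha>b) =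
     ennreal \<theta> * avg_energy M h pa \<alpha>a + ennreal (1 - \<theta>) * avg_energy M h pb \<alpha>b"
proof -
  have "avg_energy M h (mix_power \<theta> pa pb) (mix_split \<theta> pa \<alpha>a pb \<alpha>b) =
      (\<integral>\<^sup>+\<nu>. ennreal (\<theta> * energy h \<alpha>a pa \<nu> + (1 - \<theta>) * energy h \<alpha>b pb \<nu>) \<partial>M)"
    unfolding avg_energy_def using feasible \<theta>
    by (intro nn_integral_cong) (simp add: energy_mix pointwise_feasible_def)
  also have "\<dots> = ennreal \<theta> * avg_energy M h pa \<alpha>a + ennreal (1 - \<theta>) * avg_energy M h pb \<alpha>b"
    unfolding avg_energy_def using h feasible \<theta>
    by (intro nn_integral_convex_comb) (auto simp: energy_def pointwise_feasible_def)
  finally show ?thesis .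
qed

lemma integral_mix_power:
  assumes "finite_measure M"
  shows "(\<integral>\<nu>. mix_power \<theta> pa pb \<nu> \<partial>M) = \<theta> * (\<integral>\<nu>. pa \<nu> \<partial>M) + (1 - \<theta>) * (\<integral>\<nu>. pb \<nu> \<partial>M)"
proof -
  interpret finite_measure M by fact
  have "integrable M pa" "integrable M pb"
    using feasible by (auto intro!: integrable_const_bound[where B = Ppeak] simp: pointwise_feasible_def)
  then show ?thesis by (simp add: mix_power_def[abs_def])
qed

end

theorem lemma3p1:
  fixes M :: "'a measure" and h :: "'a \<Rightarrow> real" and g :: "real \<Rightarrow> real"
    and \<sigma>2 Ppeak Qa Qb Pa Pb \<theta> :: real
    and pa \<alpha>a pb \<alpha>b :: "'a \<Rightarrow> real"
  assumes "prob_space M"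
    and "h \<in> borel_measurable M" and "\<forall>\<nu>\<in>space M. 0 \<le> h \<nu>"
    and "distributed M lborel h (\<lambda>x. ennreal (g x))" and "continuous_on {0..} g"
    and "\<sigma>2 > 0" and "Ppeak > 0"
    and "Qa \<ge> 0" and "Qb \<ge> 0" and "Pa \<le> Ppeak" and "Pb \<le> Ppeak"
    and "P2_optimal M h \<sigma>2 Ppeak Qa Pa pa \<alpha>a"
    and "P2_optimal M h \<sigma>2 Ppeak Qb Pb pb \<alpha>b"
    and "0 \<le> \<theta>" and "\<theta> \<le> 1"
  shows "\<exists>pc \<alpha>c. pointwise_feasible M Ppeak pc \<alpha>c \<and>
           avg_rate M \<sigma>2 h pc \<alpha>c \<ge>
             ennreal \<theta> * avg_rate M \<sigma>2 h pa \<alpha>a + ennreal (1 - \<theta>) * avg_rate M \<sigma>2 h pb \<alpha>b \<and>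
           avg_energy M h pc \<alpha>c \<ge> ennreal (\<theta> * Qa + (1 - \<theta>) * Qb) \<and>
           (\<integral>\<nu>. pc \<nu> \<partial>M) \<le> \<theta> * Pa + (1 - \<theta>) * Pb"
proof (intro exI conjI)
  have a: "P2_feasible M h Ppeak Qa Pa pa \<alpha>a" and b: "P2_feasible M h Ppeak Qb Pb pb \<alpha>b"
    using assms(12,13) by (simp_all add: P2_optimal_def)
  then have feasible: "pointwise_feasible M Ppeak pa \<alpha>a" "pointwise_feasible M Ppeak pb \<alpha>b"
    by (simp_all add: P2_feasible_def)
  note h = assms(2) bspec[OF assms(3)]
  show "pointwise_feasible M Ppeak (mix_power \<theta> pa pb) (mix_split \<theta> pa \<alpha>a pb \<alpha>b)"
    using feasible assms(14,15) by (rule pointwise_feasible_mix)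
  show "ennreal \<theta> * avg_rate M \<sigma>2 h pa \<alpha>a + ennreal (1 - \<theta>) * avg_rate M \<sigma>2 h pb \<alpha>b
          \<le> avg_rate M \<sigma>2 h (mix_power \<theta> pa pb) (mix_split \<theta> pa \<alpha>a pb \<alpha>b)"
    using h feasible assms(14,15,6) by (rule avg_rate_mix_ge)
  have "ennreal (\<theta> * Qa + (1 - \<theta>) * Qb) = ennreal \<theta> * ennreal Qa + ennreal (1 - \<theta>) * ennreal Qb"
    using assms(8,9,14,15) by (simp add: ennreal_mult ennreal_plus)
  also have "\<dots> \<le> avg_energy M h (mix_power \<theta> pa pb) (mix_split \<theta> pa \<alpha>a pb \<alpha>b)"
    using a b assms(14,15)
    by (auto simp: avg_energy_mix[OF h feasible assms(14,15)] P2_feasible_def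
             intro!: add_mono mult_left_mono)
  finally show "ennreal (\<theta> * Qa + (1 - \<theta>) * Qb)
                  \<le> avg_energy M h (mix_power \<theta> pa pb) (mix_split \<theta> pa \<alpha>a pb \<alpha>b)" .
  show "(\<integral>\<nu>. mix_power \<theta> pa pb \<nu> \<partial>M) \<le> \<theta> * Pa + (1 - \<theta>) * Pb"
    using a b assms(14,15)
    by (auto simp: integral_mix_power[OF h feasible assms(14,15) prob_space.axioms(1)[OF assms(1)]]
             P2_feasible_def intro!: add_mono mult_left_mono)
qed

end
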